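(* Let $A = A_s + A_i\epsilon\in\mathbb{DR}^{m\times n}$ with $m\ge n$, let $k\le\min(m,n)$, and suppose $A_sP_s = Q_sR_s$, where $P_s\in\mathbb{R}^{n\times n}$ is a permutation matrix, $Q_s\in\mathbb{R}^{m\times k}$ has orthonormal columns, and $R_s = (r_{s_{ij}})\in\mathbb{R}^{k\times n}$ is upper trapezoidal (i.e. $r_{s_{ij}}=0$ for $i>j$) with $r_{s_{jj}}\neq 0$ for $j=1,\dots,k$. Then there exist $Q_i\in\mathbb{R}^{m\times k}$ and $R_i\in\mathbb{R}^{k\times n}$ such that $Q = Q_s + Q_i\epsilon$ satisfies $Q^{\top}Q = I_k$, $R = R_s + R_i\epsilon$ is upper trapezoidal, and $AP_s = QR$, if and only if $$(I_m - Q_sQ_s^{\top})A_iP_s(I_n - R_s^{\dagger}R_s) = O_{m\times n}.$$ In that case one such decomposition is obtained as follows: put $B = Q_s^{\top}A_iP_s = [b_1,\dots,b_n]$, define $P\in\mathbb{R}^{k\times k}$ with zero diagonal, strictly lower triangular part $$p_1(2{:}k) = b_1(2{:}k)/r_{s_{11}},\qquad p_j(j{+}1{:}k) = \Big(b_j(j{+}1{:}k) - \sum_{t=1}^{j-1} r_{s_{tj}}\,p_t(j{+}1{:}k)\Big)\Big/r_{s_{jj}},\quad j=2,\dots,k-1,$$ and $P^{\top}=-P$, and set $$Q_i = (I_m - Q_sQ_s^{\top})A_iP_sR_s^{\dagger} + Q_sP,\qquad R_i = Q_s^{\top}A_iP_s - PR_s.$$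
   Context: A dual number is $a = a_s + a_i\epsilon$ with $a_s,a_i\in\mathbb{R}$, where $\epsilon^2=0$, $\epsilon\neq 0$; $\mathbb{DR}^{m\times n}$ denotes the set of dual matrices $A = A_s + A_i\epsilon$ with $A_s, A_i\in\mathbb{R}^{m\times n}$. Products use $\epsilon^2=0$: $(A_s+A_i\epsilon)(B_s+B_i\epsilon) = A_sB_s + (A_sB_i + A_iB_s)\epsilon$. The transpose is $A^{\top}=A_s^{\top}+A_i^{\top}\epsilon$. A dual matrix is upper trapezoidal if both its standard and infinitesimal parts are upper trapezoidal (zero below the main diagonal). $M^{\dagger}$ denotes the Moore–Penrose pseudoinverse of a real matrix $M$. For a vector $v$, $v(a{:}b)$ is the subvector of entries $a$ through $b$. (In the paper, $A_sP_s=Q_sR_s$ arises from a randomized QR decomposition with column pivoting, but only the stated factorization properties are used.) *)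

theory Defs
  imports "Jordan_Normal_Form.Matrix" "HOL-Combinatorics.Permutations"
begin

text \<open>Dual matrices A = A_s + A_i eps are represented as pairs (A_s, A_i) of real matrices.\<close>
type_synonym dmat = "real mat \<times> real mat"

definition dual_mult :: "dmat \<Rightarrow> dmat \<Rightarrow> dmat" where
  "dual_mult A B = (fst A * fst B, fst A * snd B + snd A * fst B)"

definition dual_transpose :: "dmat \<Rightarrow> dmat" where
  "dual_transpose A = (transpose_mat (fst A), transpose_mat (snd A))"

definition upper_trapezoidal :: "real mat \<Rightarrow> bool" where
  "upper_trapezoidal M \<longleftrightarrow> (\<forall>i<dim_row M. \<forall>j<dim_col M. j < i \<longrightarrow> M $$ (i, j) = 0)"

definition dual_upper_trapezoidal :: "dmat \<Rightarrow> bool" where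
  "dual_upper_trapezoidal A \<longleftrightarrow> upper_trapezoidal (fst A) \<and> upper_trapezoidal (snd A)"

definition permutation_mat :: "nat \<Rightarrow> real mat \<Rightarrow> bool" where
  "permutation_mat n P \<longleftrightarrow> (\<exists>p. p permutes {0..<n} \<and>
      P = mat n n (\<lambda>(i, j). if i = p j then 1 else 0))"

definition pinv :: "real mat \<Rightarrow> real mat" where
  "pinv M = (THE X. X \<in> carrier_mat (dim_col M) (dim_row M) \<and>
      M * X * M = M \<and> X * M * X = X \<and>
      transpose_mat (M * X) = M * X \<and> transpose_mat (X * M) = X * M)"

text \<open>Strictly lower triangular entries of the matrix P of the theorem (0-based indices):
  for i > j,  P(i,j) = (B(i,j) - sum_{t<j} R(t,j) P(i,t)) / R(j,j).\<close>
fun lowP :: "real mat \<Rightarrow> real mat \<Rightarrow> nat \<Rightarrow> nat \<Rightarrow> real" where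
  "lowP B R i j = (B $$ (i, j) - (\<Sum>t<j. R $$ (t, j) * lowP B R i t)) / R $$ (j, j)"

definition Pmat :: "nat \<Rightarrow> real mat \<Rightarrow> real mat \<Rightarrow> real mat" where
  "Pmat k B R = mat k k (\<lambda>(i, j). if j < i then lowP B R i j
                                   else if i < j then - lowP B R j i else 0)"

end

theory Submission
  imports Defs "Jordan_Normal_Form.Determinant"
begin

text \<open>Comparing standard and infinitesimal parts, a dual factorisation A Ps = Q R with
  Q^T Q = I amounts to Ai Ps = Qs Ri + Qi Rs with Qs^T Qi skew-symmetric. Since Rs has full row
  rank, Rs Rs^+ = I, so multiplying by the projector I - Qs Qs^T on the left and by I - Rs^+ Rs on
  the right annihilates the right-hand side. Conversely, when that product vanishes, the
  (I - Qs Qs^T)-component of Ai Ps equals W Rs with W = (I - Qs Qs^T) Ai Ps Rs^+, and the remaining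
  freedom Qi = W + Qs P, Ri = Qs^T Ai Ps - P Rs with P skew-symmetric is fixed by requiring Ri to
  be upper trapezoidal: this determines the strictly lower part of P row by row, by forward
  substitution against the nonzero diagonal of Rs.\<close>

(* the recursive equation of lowP would be unfolded indefinitely inside its own sum *)
declare lowP.simps[simp del]

(* the dimension form of assoc_mult_mat can be used by the simplifier, which cannot
   guess the intermediate dimensions of the carrier form *)
lemma assoc_mult_mat_dim:
  "dim_col A = dim_row B \<Longrightarrow> dim_col B = dim_row C \<Longrightarrow> A * B * C = A * (B * C)"
  by (rule assoc_mult_mat) auto

lemma minus_mat_eq_0_iff:
  fixes A B :: "'a :: ab_group_add mat"
  assumes "A \<in> carrier_mat nr nc" and "B \<in> carrier_mat nr nc"
  shows "A - B = 0\<^sub>m nr nc \<longleftrightarrow> A = B"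
proof
  assume eq: "A - B = 0\<^sub>m nr nc"
  show "A = B"
  proof (rule eq_matI)
    fix i j assume ij: "i < dim_row B" "j < dim_col B"
    have "(A - B) $$ (i, j) = 0\<^sub>m nr nc $$ (i, j)" by (simp only: eq)
    thus "A $$ (i, j) = B $$ (i, j)" using assms ij by simp
  qed (use assms in auto)
qed (use assms in \<open>intro eq_matI; auto\<close>)

definition penrose_conditions :: "real mat \<Rightarrow> real mat \<Rightarrow> bool" where
  "penrose_conditions M X \<longleftrightarrow> X \<in> carrier_mat (dim_col M) (dim_row M) \<and>
      M * X * M = M \<and> X * M * X = X \<and>
      transpose_mat (M * X) = M * X \<and> transpose_mat (X * M) = X * M"

lemma penrose_conditions_transpose:
  assumes X: "penrose_conditions M X"
  shows "transpose_mat X * transpose_mat M = M * X"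
    and "transpose_mat M * transpose_mat X = X * M"
    and "transpose_mat M = transpose_mat M * (M * X)"
    and "transpose_mat M = X * M * transpose_mat M"
proof -
  define r c where "r = dim_row M" and "c = dim_col M"
  have M: "M \<in> carrier_mat r c" unfolding r_def c_def by auto
  have Xc: "X \<in> carrier_mat c r" using X unfolding penrose_conditions_def r_def c_def by auto
  show MX: "transpose_mat X * transpose_mat M = M * X"
    and XM: "transpose_mat M * transpose_mat X = X * M"
    using X transpose_mult[OF M Xc] transpose_mult[OF Xc M] unfolding penrose_conditions_def by auto
  have MXM: "M * X * M = M" using X unfolding penrose_conditions_def by auto
  have "transpose_mat M = transpose_mat (M * X * M)" using MXM by simp
  also have "\<dots> = transpose_mat M * (transpose_mat X * transpose_mat M)"
    by (simp only: transpose_mult[OF mult_carrier_mat[OF M Xc] M] transpose_mult[OF M Xc])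
  finally show "transpose_mat M = transpose_mat M * (M * X)" by (simp only: MX)
  have "transpose_mat M = transpose_mat (M * (X * M))" using MXM M Xc by simp
  also have "\<dots> = (transpose_mat M * transpose_mat X) * transpose_mat M"
    by (simp only: transpose_mult[OF M mult_carrier_mat[OF Xc M]] transpose_mult[OF Xc M])
  finally show "transpose_mat M = X * M * transpose_mat M" by (simp only: XM)
qed

lemma penrose_conditions_unique:
  assumes X: "penrose_conditions M X" and Y: "penrose_conditions M Y"
  shows "X = Y"
proof -
  define r c where "r = dim_row M" and "c = dim_col M"
  have M: "M \<in> carrier_mat r c" unfolding r_def c_def by auto
  have Xc: "X \<in> carrier_mat c r" and Yc: "Y \<in> carrier_mat c r"
    and XMX: "X * M * X = X" and YMY: "Y * M * Y = Y"
    using X Y unfolding penrose_conditions_def r_def c_def by auto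
  note MX = penrose_conditions_transpose(1)[OF X] and YM = penrose_conditions_transpose(2)[OF Y]
  have "X = X * (M * X)" using XMX M Xc by simp
  also have "\<dots> = X * (transpose_mat X * (transpose_mat M * (M * Y)))"
    using MX penrose_conditions_transpose(3)[OF Y] by metis
  also have "\<dots> = (X * (M * X)) * (M * Y)"
    using M Xc Yc by (simp add: assoc_mult_mat_dim flip: MX)
  also have "\<dots> = X * (M * Y)" using XMX M Xc by simp
  also have "\<dots> = (X * M) * ((Y * M) * Y)" using YMY M Xc Yc by simp
  also have "\<dots> = ((X * M * transpose_mat M) * transpose_mat Y) * Y"
    using M Xc Yc by (simp add: assoc_mult_mat_dim flip: YM)
  also have "\<dots> = (Y * M) * Y"
    using YM penrose_conditions_transpose(4)[OF X] by metis
  also have "\<dots> = Y" using YMY M Yc by simp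
  finally show ?thesis .
qed

lemma pinv_eqI:
  assumes "penrose_conditions M X"
  shows "pinv M = X"
  unfolding pinv_def penrose_conditions_def[symmetric]
  by (rule the_equality) (use assms penrose_conditions_unique in blast)+

lemma right_inverse_symmetric:
  fixes G Gi :: "'a :: comm_ring_1 mat"
  assumes G: "G \<in> carrier_mat k k" and GT: "transpose_mat G = G"
    and Gi: "Gi \<in> carrier_mat k k" and GGi: "G * Gi = 1\<^sub>m k"
  shows "transpose_mat Gi = Gi"
proof -
  have GiTG: "transpose_mat Gi * G = 1\<^sub>m k"
    using arg_cong[OF GGi, of transpose_mat] by (simp add: transpose_mult[OF G Gi] GT)
  have "transpose_mat Gi = transpose_mat Gi * (G * Gi)" using GGi Gi by simp
  also have "\<dots> = (transpose_mat Gi * G) * Gi" using G Gi by (simp add: assoc_mult_mat_dim)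
  also have "\<dots> = Gi" using GiTG Gi by simp
  finally show ?thesis .
qed

(* full row rank: the pseudoinverse is M^T (M M^T)^-1 *)
lemma pinv_right_inverse:
  fixes M :: "real mat"
  assumes M: "M \<in> carrier_mat k n" and det: "det (M * transpose_mat M) \<noteq> 0"
  shows "pinv M \<in> carrier_mat n k" and "M * pinv M = 1\<^sub>m k"
proof -
  define G where "G = M * transpose_mat M"
  have G: "G \<in> carrier_mat k k" unfolding G_def using M by simp
  have GT: "transpose_mat G = G" unfolding G_def using M by (simp add: transpose_mult[of M k n])
  obtain Gi where Gi: "Gi \<in> carrier_mat k k" and GGi: "G * Gi = 1\<^sub>m k"
    using det_non_zero_imp_unit[OF G det[folded G_def]] unfolding Units_def ring_mat_def by auto
  define X where "X = transpose_mat M * Gi"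
  have X: "X \<in> carrier_mat n k" unfolding X_def using M Gi by simp
  have MX: "M * X = 1\<^sub>m k" using GGi M Gi unfolding X_def G_def by simp
  have "transpose_mat X = Gi * M"
    unfolding X_def using M Gi right_inverse_symmetric[OF G GT Gi GGi]
    by (simp add: transpose_mult[of _ n k _ k])
  hence "transpose_mat (X * M) = X * M"
    using transpose_mult[OF X M] M Gi by (simp add: X_def)
  hence "penrose_conditions M X"
    unfolding penrose_conditions_def using M X MX by simp
  thus "pinv M \<in> carrier_mat n k" and "M * pinv M = 1\<^sub>m k"
    using pinv_eqI X MX by auto
qed

lemma det_gram_neq_0:
  fixes M :: "real mat"
  assumes M: "M \<in> carrier_mat k n"
    and inj: "\<And>x. x \<in> carrier_vec k \<Longrightarrow> transpose_mat M *\<^sub>v x = 0\<^sub>v n \<Longrightarrow> x = 0\<^sub>v k"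
  shows "det (M * transpose_mat M) \<noteq> 0"
proof
  assume "det (M * transpose_mat M) = 0"
  then obtain v where v: "v \<in> carrier_vec k" "v \<noteq> 0\<^sub>v k" "(M * transpose_mat M) *\<^sub>v v = 0\<^sub>v k"
    using det_0_iff_vec_prod_zero[of "M * transpose_mat M" k] M by auto
  let ?w = "transpose_mat M *\<^sub>v v"
  have w: "?w \<in> carrier_vec n" using M v(1) by simp
  have "?w \<bullet> ?w = v \<bullet> (M *\<^sub>v ?w)"
    by (rule transpose_vec_mult_scalar[OF M w v(1)])
  also have "\<dots> = 0" using v M by simp
  finally have "?w = 0\<^sub>v n" using conjugate_square_eq_0_vec[OF w] by simp
  thus False using inj v by blast
qed

lemma upper_trapezoidal_transpose_mult_vec_eq_0:
  fixes R :: "real mat"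
  assumes R: "R \<in> carrier_mat k n" and kn: "k \<le> n" and ut: "upper_trapezoidal R"
    and diag: "\<forall>j<k. R $$ (j, j) \<noteq> 0"
    and x: "x \<in> carrier_vec k" and Rx: "transpose_mat R *\<^sub>v x = 0\<^sub>v n"
  shows "x = 0\<^sub>v k"
proof -
  have "x $ j = 0" if "j < k" for j
    using that
  proof (induction j rule: less_induct)
    case (less j)
    have "0 = (transpose_mat R *\<^sub>v x) $ j" using Rx less.prems kn by simp
    also have "\<dots> = (\<Sum>i\<in>{0..<k}. R $$ (i, j) * x $ i)"
      using R x less.prems kn by (simp add: scalar_prod_def)
    also have "\<dots> = (\<Sum>i\<in>{j}. R $$ (i, j) * x $ i)"
    proof (rule sum.mono_neutral_right)
      show "\<forall>i\<in>{0..<k} - {j}. R $$ (i, j) * x $ i = 0"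
      proof
        fix i assume i: "i \<in> {0..<k} - {j}"
        show "R $$ (i, j) * x $ i = 0"
        proof (cases "i < j")
          case True
          thus ?thesis using less.IH[of i] less.prems by simp
        next
          case False
          hence "R $$ (i, j) = 0"
            using i ut R less.prems kn unfolding upper_trapezoidal_def by auto
          thus ?thesis by simp
        qed
      qed
    qed (use less.prems in auto)
    finally show "x $ j = 0" using diag less.prems by simp
  qed
  thus ?thesis using x by (intro eq_vecI) auto
qed

lemma pinv_upper_trapezoidal:
  fixes R :: "real mat"
  assumes R: "R \<in> carrier_mat k n" and kn: "k \<le> n" and ut: "upper_trapezoidal R"
    and diag: "\<forall>j<k. R $$ (j, j) \<noteq> 0"
  shows "pinv R \<in> carrier_mat n k" and "R * pinv R = 1\<^sub>m k"
  using pinv_right_inverse[OF R det_gram_neq_0[OF R]]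
    upper_trapezoidal_transpose_mult_vec_eq_0[OF R kn ut diag] by blast+

lemma dim_Pmat [simp]: "dim_row (Pmat k B R) = k" "dim_col (Pmat k B R) = k"
  by (simp_all add: Pmat_def)

lemma Pmat_carrier: "Pmat k B R \<in> carrier_mat k k"
  by (simp add: carrier_matI)

lemma Pmat_add_transpose: "Pmat k B R + transpose_mat (Pmat k B R) = 0\<^sub>m k k"
  by (rule eq_matI) (auto simp: Pmat_def)

lemma Pmat_mult_strictly_lower:
  fixes B R :: "real mat"
  assumes R: "R \<in> carrier_mat k n" and ut: "upper_trapezoidal R"
    and diag: "\<forall>j<k. R $$ (j, j) \<noteq> 0" and ji: "j < i" and ik: "i < k" and jn: "j < n"
  shows "(Pmat k B R * R) $$ (i, j) = B $$ (i, j)"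
proof -
  have "(Pmat k B R * R) $$ (i, j) = (\<Sum>t<k. Pmat k B R $$ (i, t) * R $$ (t, j))"
    using R ik jn by (simp add: scalar_prod_def lessThan_atLeast0)
  also have "\<dots> = (\<Sum>t<Suc j. Pmat k B R $$ (i, t) * R $$ (t, j))"
    by (rule sum.mono_neutral_right) (use R ut ji ik jn in \<open>auto simp: upper_trapezoidal_def\<close>)
  also have "\<dots> = (\<Sum>t<j. R $$ (t, j) * lowP B R i t) + lowP B R i j * R $$ (j, j)"
    using ji ik by (simp add: Pmat_def mult.commute)
  also have "\<dots> = B $$ (i, j)"
    using diag ji ik by (subst (2) lowP.simps) simp
  finally show ?thesis .
qed

lemma upper_trapezoidal_minus_Pmat_mult:
  fixes B R :: "real mat"
  assumes B: "B \<in> carrier_mat k n" and R: "R \<in> carrier_mat k n" and ut: "upper_trapezoidal R"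
    and diag: "\<forall>j<k. R $$ (j, j) \<noteq> 0"
  shows "upper_trapezoidal (B - Pmat k B R * R)"
  unfolding upper_trapezoidal_def
  using B R Pmat_mult_strictly_lower[OF R ut diag, of _ _ B] by auto

lemma orthonormal_cols_proj_complement:
  fixes Q :: "real mat"
  assumes Q: "Q \<in> carrier_mat m k" and QtQ: "transpose_mat Q * Q = 1\<^sub>m k"
  shows "(1\<^sub>m m - Q * transpose_mat Q) * Q = 0\<^sub>m m k"
    and "transpose_mat Q * (1\<^sub>m m - Q * transpose_mat Q) = 0\<^sub>m k m"
proof -
  have "(1\<^sub>m m - Q * transpose_mat Q) * Q = Q - Q * (transpose_mat Q * Q)"
    using Q by (simp add: minus_mult_distrib_mat[of _ m m _ _ k])
  thus "(1\<^sub>m m - Q * transpose_mat Q) * Q = 0\<^sub>m m k" using Q QtQ by simp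
  have "transpose_mat Q * (1\<^sub>m m - Q * transpose_mat Q)
      = transpose_mat Q - (transpose_mat Q * Q) * transpose_mat Q"
    using Q by (simp add: mult_minus_distrib_mat[of _ k m _ m])
  thus "transpose_mat Q * (1\<^sub>m m - Q * transpose_mat Q) = 0\<^sub>m k m" using Q QtQ by simp
qed

lemma dual_qr_infinitesimal_necessary:
  fixes Q R X Qi Ri C :: "real mat"
  assumes Q: "Q \<in> carrier_mat m k" and QtQ: "transpose_mat Q * Q = 1\<^sub>m k"
    and R: "R \<in> carrier_mat k n" and X: "X \<in> carrier_mat n k" and RXR: "R * X * R = R"
    and Qi: "Qi \<in> carrier_mat m k" and Ri: "Ri \<in> carrier_mat k n"
    and C: "C = Q * Ri + Qi * R"
  shows "(1\<^sub>m m - Q * transpose_mat Q) * C * (1\<^sub>m n - X * R) = 0\<^sub>m m n"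
proof -
  define H where "H = 1\<^sub>m m - Q * transpose_mat Q"
  have H: "H \<in> carrier_mat m m" unfolding H_def using Q by (simp add: minus_carrier_mat)
  have HQ: "H * Q = 0\<^sub>m m k"
    unfolding H_def by (rule orthonormal_cols_proj_complement(1)[OF Q QtQ])
  define K where "K = H * Qi"
  have K: "K \<in> carrier_mat m k" unfolding K_def using H Qi by simp
  have "H * C = (H * Q) * Ri + K * R"
    unfolding C K_def using H Q Qi R Ri by (simp add: mult_add_distrib_mat[of _ m m _ n])
  also have "\<dots> = K * R" using HQ K R Ri by simp
  finally have "H * C * (1\<^sub>m n - X * R) = K * R - K * (R * X * R)"
    using K R X by (simp add: mult_minus_distrib_mat[of _ m n _ n] assoc_mult_mat_dim)
  also have "\<dots> = 0\<^sub>m m n" using RXR K R by simp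
  finally show ?thesis unfolding H_def .
qed

lemma orthonormal_cols_skew_perturbation:
  fixes Q W P :: "real mat"
  assumes Q: "Q \<in> carrier_mat m k" and QtQ: "transpose_mat Q * Q = 1\<^sub>m k"
    and W: "W \<in> carrier_mat m k" and QtW: "transpose_mat Q * W = 0\<^sub>m k k"
    and P: "P \<in> carrier_mat k k" and skew: "P + transpose_mat P = 0\<^sub>m k k"
  shows "transpose_mat Q * (W + Q * P) + transpose_mat (W + Q * P) * Q = 0\<^sub>m k k"
proof -
  have "transpose_mat Q * (W + Q * P) = transpose_mat Q * W + (transpose_mat Q * Q) * P"
    using Q W P by (simp add: mult_add_distrib_mat[of _ k m _ k] assoc_mult_mat_dim)
  hence QtQi: "transpose_mat Q * (W + Q * P) = P" using QtW QtQ P by simp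
  hence "transpose_mat (W + Q * P) * Q = transpose_mat P"
    using transpose_mult[of "transpose_mat Q" k m "W + Q * P" k] Q W P by simp
  thus ?thesis using QtQi skew by simp
qed

lemma proj_complement_factorization:
  fixes Q R X C P :: "real mat"
  assumes Q: "Q \<in> carrier_mat m k" and R: "R \<in> carrier_mat k n" and X: "X \<in> carrier_mat n k"
    and C: "C \<in> carrier_mat m n" and P: "P \<in> carrier_mat k k"
    and solvable: "(1\<^sub>m m - Q * transpose_mat Q) * C * (1\<^sub>m n - X * R) = 0\<^sub>m m n"
  shows "C = Q * (transpose_mat Q * C - P * R) + ((1\<^sub>m m - Q * transpose_mat Q) * C * X + Q * P) * R"
proof -
  define H where "H = 1\<^sub>m m - Q * transpose_mat Q"
  have H: "H \<in> carrier_mat m m" unfolding H_def using Q by (simp add: minus_carrier_mat)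
  have "H * C - H * C * (X * R) = 0\<^sub>m m n"
    using solvable[folded H_def] H C X R by (simp add: mult_minus_distrib_mat[of _ m n _ n])
  moreover have "H * C \<in> carrier_mat m n" and "H * C * (X * R) \<in> carrier_mat m n"
    using H C X R by (meson mult_carrier_mat)+
  ultimately have "H * C * (X * R) = H * C" by (simp add: minus_mat_eq_0_iff)
  hence "(H * C * X + Q * P) * R = H * C + Q * P * R"
    using H C X Q P R by (simp add: add_mult_distrib_mat[of _ m k _ _ n] assoc_mult_mat_dim)
  also have "H * C + Q * P * R = (C - Q * transpose_mat Q * C) + Q * P * R"
    unfolding H_def using Q C by (simp add: minus_mult_distrib_mat[of _ m m _ _ n])
  finally have "(H * C * X + Q * P) * R = (C - Q * transpose_mat Q * C) + Q * P * R" .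
  moreover have "Q * (transpose_mat Q * C - P * R) = Q * transpose_mat Q * C - Q * P * R"
    using Q C P R by (simp add: mult_minus_distrib_mat[of _ m k _ n])
  moreover have "C = (A - B) + ((C - A) + B)" if "A \<in> carrier_mat m n" "B \<in> carrier_mat m n"
    for A B :: "real mat"
    using that C by (intro eq_matI) auto
  ultimately show ?thesis unfolding H_def using Q C P R by simp
qed

lemma dual_qr_infinitesimal_sufficient:
  fixes Q R X C :: "real mat"
  assumes Q: "Q \<in> carrier_mat m k" and QtQ: "transpose_mat Q * Q = 1\<^sub>m k"
    and R: "R \<in> carrier_mat k n" and ut: "upper_trapezoidal R"
    and diag: "\<forall>j<k. R $$ (j, j) \<noteq> 0"
    and X: "X \<in> carrier_mat n k" and C: "C \<in> carrier_mat m n"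
    and solvable: "(1\<^sub>m m - Q * transpose_mat Q) * C * (1\<^sub>m n - X * R) = 0\<^sub>m m n"
  defines "Qi \<equiv> (1\<^sub>m m - Q * transpose_mat Q) * C * X + Q * Pmat k (transpose_mat Q * C) R"
    and "Ri \<equiv> transpose_mat Q * C - Pmat k (transpose_mat Q * C) R * R"
  shows "Qi \<in> carrier_mat m k" and "Ri \<in> carrier_mat k n"
    and "transpose_mat Q * Qi + transpose_mat Qi * Q = 0\<^sub>m k k"
    and "upper_trapezoidal Ri"
    and "C = Q * Ri + Qi * R"
proof -
  define H where "H = 1\<^sub>m m - Q * transpose_mat Q"
  have H: "H \<in> carrier_mat m m" unfolding H_def using Q by (simp add: minus_carrier_mat)
  have HCX: "H * C * X \<in> carrier_mat m k" using H C X by simp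
  have "transpose_mat Q * (H * C * X) = (transpose_mat Q * H) * (C * X)"
    using H C X Q by (simp add: assoc_mult_mat_dim)
  hence QtHCX: "transpose_mat Q * (H * C * X) = 0\<^sub>m k k"
    using orthonormal_cols_proj_complement(2)[OF Q QtQ, folded H_def] C X by simp
  note P = Pmat_carrier[of k "transpose_mat Q * C" R]
  show "Qi \<in> carrier_mat m k" unfolding Qi_def H_def[symmetric] using HCX Q P by simp
  show "Ri \<in> carrier_mat k n" unfolding Ri_def using Q C P R by (simp add: minus_carrier_mat)
  show "transpose_mat Q * Qi + transpose_mat Qi * Q = 0\<^sub>m k k"
    unfolding Qi_def H_def[symmetric]
    by (rule orthonormal_cols_skew_perturbation[OF Q QtQ HCX QtHCX P Pmat_add_transpose])
  show "upper_trapezoidal Ri"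
    unfolding Ri_def using Q C R ut diag by (intro upper_trapezoidal_minus_Pmat_mult) auto
  show "C = Q * Ri + Qi * R"
    unfolding Qi_def Ri_def by (rule proj_complement_factorization[OF Q R X C P solvable])
qed

theorem theorem3p3:
  fixes m n k :: nat and As Ai Ps Qs Rs :: "real mat"
  assumes "n \<le> m" and "k \<le> min m n"
    and "As \<in> carrier_mat m n" and "Ai \<in> carrier_mat m n"
    and "Ps \<in> carrier_mat n n" and "permutation_mat n Ps"
    and "Qs \<in> carrier_mat m k" and "transpose_mat Qs * Qs = 1\<^sub>m k"
    and "Rs \<in> carrier_mat k n" and "upper_trapezoidal Rs"
    and "\<forall>j<k. Rs $$ (j, j) \<noteq> 0"
    and "As * Ps = Qs * Rs"
  shows "((\<exists>Qi Ri. Qi \<in> carrier_mat m k \<and> Ri \<in> carrier_mat k n \<and>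
            dual_mult (dual_transpose (Qs, Qi)) (Qs, Qi) = (1\<^sub>m k, 0\<^sub>m k k) \<and>
            dual_upper_trapezoidal (Rs, Ri) \<and>
            dual_mult (As, Ai) (Ps, 0\<^sub>m n n) = dual_mult (Qs, Qi) (Rs, Ri))
          \<longleftrightarrow> (1\<^sub>m m - Qs * transpose_mat Qs) * Ai * Ps * (1\<^sub>m n - pinv Rs * Rs) = 0\<^sub>m m n)
       \<and> ((1\<^sub>m m - Qs * transpose_mat Qs) * Ai * Ps * (1\<^sub>m n - pinv Rs * Rs) = 0\<^sub>m m n \<longrightarrow>
          (let B = transpose_mat Qs * Ai * Ps;
               P = Pmat k B Rs;
               Qi = (1\<^sub>m m - Qs * transpose_mat Qs) * Ai * Ps * pinv Rs + Qs * P;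
               Ri = transpose_mat Qs * Ai * Ps - P * Rs
           in dual_mult (dual_transpose (Qs, Qi)) (Qs, Qi) = (1\<^sub>m k, 0\<^sub>m k k) \<and>
              dual_upper_trapezoidal (Rs, Ri) \<and>
              dual_mult (As, Ai) (Ps, 0\<^sub>m n n) = dual_mult (Qs, Qi) (Rs, Ri)))"
proof -
  note Qs = assms(7) and QtQ = assms(8) and Rs = assms(9) and ut = assms(10) and diag = assms(11)
  have kn: "k \<le> n" using assms(2) by simp
  note X = pinv_upper_trapezoidal[OF Rs kn ut diag]
  have RXR: "Rs * pinv Rs * Rs = Rs" using X Rs by simp
  have C: "Ai * Ps \<in> carrier_mat m n" using assms(4,5) by simp
  have zero: "As * 0\<^sub>m n n + Ai * Ps = Ai * Ps" using assms(3) C by simp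
  have assoc:
    "(1\<^sub>m m - Qs * transpose_mat Qs) * Ai * Ps = (1\<^sub>m m - Qs * transpose_mat Qs) * (Ai * Ps)"
    "transpose_mat Qs * Ai * Ps = transpose_mat Qs * (Ai * Ps)"
    using Qs assms(4,5) by (simp_all add: assoc_mult_mat_dim)
  define Qi where "Qi = (1\<^sub>m m - Qs * transpose_mat Qs) * (Ai * Ps) * pinv Rs
    + Qs * Pmat k (transpose_mat Qs * (Ai * Ps)) Rs"
  define Ri where "Ri = transpose_mat Qs * (Ai * Ps) - Pmat k (transpose_mat Qs * (Ai * Ps)) Rs * Rs"
  note necessary = dual_qr_infinitesimal_necessary[OF Qs QtQ Rs X(1) RXR, where C = "Ai * Ps"]
  note sufficient =
    dual_qr_infinitesimal_sufficient[OF Qs QtQ Rs ut diag X(1) C, folded Qi_def Ri_def]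
  show ?thesis
    unfolding Let_def assoc Qi_def[symmetric] Ri_def[symmetric]
    by (simp only: dual_mult_def dual_transpose_def dual_upper_trapezoidal_def fst_conv snd_conv
        prod.inject assms(12) QtQ ut zero simp_thms)
      (use necessary sufficient in blast)
qed

end
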